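(* Let $\widehat G\in\mathbb{C}^{2\times 2}$ and $\widehat J=\mathrm{diag}(j_{11},j_{22})$ with $j_{11},j_{22}\in\{1,-1\}$. Then there exist a unitary $\check U\in\mathbb{C}^{2\times2}$ and a matrix $\check V\in\mathbb{C}^{2\times 2}$ that is both unitary and $\widehat J$-unitary ($\check V^\ast\widehat J\check V=\widehat J$) such that $\widehat T=\check U^\ast\widehat G\check V$ is real with non-negative entries and: (i) if $\widehat J=\pm I_2$, or if $\widehat J$ is indefinite and the first column of $\widehat G$ has Frobenius norm at least that of the second column, then $\widehat T$ is upper triangular with $\hat t_{11}^2\ge\hat t_{12}^2+\hat t_{22}^2$; (ii) if $\widehat J$ is indefinite and the first column of $\widehat G$ has strictly smaller Frobenius norm than the second, then $\widehat T$ is lower triangular with $\hat t_{22}^2\ge\hat t_{21}^2+\hat t_{11}^2$.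
   Context: This is the $2\times 2$ $\widehat J$-UTV factorization. A matrix $V$ is $\widehat J$-unitary if $V^\ast\widehat J V=\widehat J$. *)

theory Defs
  imports "HOL-Analysis.Analysis"
begin

text \<open>2x2 complex matrices are represented as complex^2^2 (rows indexed by type 2).\<close>

definition conj_transpose :: "complex^'n^'m \<Rightarrow> complex^'m^'n" where
  "conj_transpose A = (\<chi> i j. cnj (A $ j $ i))"

definition unitary_mat :: "complex^'n^'n \<Rightarrow> bool" where
  "unitary_mat U \<longleftrightarrow> conj_transpose U ** U = mat 1"

definition J_unitary :: "complex^'n^'n \<Rightarrow> complex^'n^'n \<Rightarrow> bool" where
  "J_unitary J V \<longleftrightarrow> conj_transpose V ** J ** V = J"

definition diag2 :: "complex \<Rightarrow> complex \<Rightarrow> complex^2^2" where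
  "diag2 a b = (\<chi> i k. if i = k then (if i = 1 then a else b) else 0)"

definition col_norm :: "complex^'n^'m \<Rightarrow> 'n \<Rightarrow> real" where
  "col_norm A k = sqrt (\<Sum>i\<in>UNIV. (cmod (A $ i $ k))\<^sup>2)"

end

theory Submission
  imports Defs
begin

text \<open>
  Write \<open>G = [a | b]\<close> by columns and suppose \<open>\<parallel>b\<parallel> \<le> \<parallel>a\<parallel>\<close>. A unitary \<open>U\<close> with first
  column \<open>a / \<parallel>a\<parallel>\<close> turns \<open>G\<close> into an upper triangular matrix with \<open>t\<^sub>1\<^sub>1 = \<parallel>a\<parallel>\<close>, and
  since \<open>U\<close> is unitary the second column keeps its norm (Lagrange's identity), so
  \<open>t\<^sub>1\<^sub>2\<^sup>2 + t\<^sub>2\<^sub>2\<^sup>2 = \<parallel>b\<parallel>\<^sup>2 \<le> t\<^sub>1\<^sub>1\<^sup>2\<close>. The phases of \<open>t\<^sub>1\<^sub>2\<close> and \<open>t\<^sub>2\<^sub>2\<close> are absorbed by a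
  unimodular scalar in \<open>V\<close> and in the second column of \<open>U\<close>. Unimodular diagonal matrices
  are \<open>J\<close>-unitary for every diagonal \<open>J\<close>; the column swap needed when \<open>\<parallel>a\<parallel> < \<parallel>b\<parallel>\<close> is
  \<open>J\<close>-unitary only for \<open>J = \<plusminus>I\<close>. For indefinite \<open>J\<close> one conjugates the triangular factor
  by the swap instead, which makes it lower triangular.
\<close>

definition mat2 :: "complex \<Rightarrow> complex \<Rightarrow> complex \<Rightarrow> complex \<Rightarrow> complex^2^2" where
  "mat2 p q r s = (\<chi> i j. if i = 1 then (if j = 1 then p else q) else (if j = 1 then r else s))"

lemma mat2_nth [simp]:
  "mat2 p q r s $ 1 $ 1 = p" "mat2 p q r s $ 1 $ 2 = q"
  "mat2 p q r s $ 2 $ 1 = r" "mat2 p q r s $ 2 $ 2 = s"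
  by (simp_all add: mat2_def)

lemma mat2_eta: "(A :: complex^2^2) = mat2 (A$1$1) (A$1$2) (A$2$1) (A$2$2)"
  by (simp add: vec_eq_iff forall_2)

lemma mat2_eq_iff [simp]: "mat2 p q r s = mat2 e f g h \<longleftrightarrow> p = e \<and> q = f \<and> r = g \<and> s = h"
  by (metis mat2_nth)

lemma mat2_mult [simp]:
  "mat2 p q r s ** mat2 e f g h = mat2 (p*e + q*g) (p*f + q*h) (r*e + s*g) (r*f + s*h)"
  by (simp add: vec_eq_iff forall_2 matrix_matrix_mult_def sum_2)

lemma conj_transpose_mat2 [simp]: "conj_transpose (mat2 p q r s) = mat2 (cnj p) (cnj r) (cnj q) (cnj s)"
  by (simp add: vec_eq_iff forall_2 conj_transpose_def)

lemma mat_1_eq_mat2: "(mat 1 :: complex^2^2) = mat2 1 0 0 1"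
  by (simp add: vec_eq_iff forall_2 mat_def)

lemma diag2_eq_mat2: "diag2 a b = mat2 a 0 0 b"
  by (simp add: vec_eq_iff forall_2 diag2_def)

lemma col_norm_2: "col_norm (G :: complex^2^2) k = sqrt ((cmod (G$1$k))\<^sup>2 + (cmod (G$2$k))\<^sup>2)"
  by (simp add: col_norm_def sum_2)

lemma conj_transpose_mult: "conj_transpose (A ** B) = conj_transpose B ** conj_transpose A"
  by (simp add: vec_eq_iff conj_transpose_def matrix_matrix_mult_def mult.commute)

lemma unitary_mat_mult:
  assumes "unitary_mat A" and "unitary_mat B"
  shows "unitary_mat (A ** B)"
proof -
  have "conj_transpose (A ** B) ** (A ** B) = conj_transpose B ** (conj_transpose A ** A) ** B"
    by (simp add: conj_transpose_mult matrix_mul_assoc)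
  with assms show ?thesis
    by (simp add: unitary_mat_def)
qed

lemma J_unitary_mult:
  assumes "J_unitary J A" and "J_unitary J B"
  shows "J_unitary J (A ** B)"
proof -
  have "conj_transpose (A ** B) ** J ** (A ** B) = conj_transpose B ** (conj_transpose A ** J ** A) ** B"
    by (simp add: conj_transpose_mult matrix_mul_assoc)
  with assms show ?thesis
    by (simp add: J_unitary_def)
qed

lemma cnj_mult_self_unit: "cmod w = 1 \<Longrightarrow> cnj w * w = 1"
  by (metis complex_norm_square mult.commute of_real_1 one_power2 complex_mult_cnj)

lemma unitary_mat_diag2: "cmod v = 1 \<Longrightarrow> cmod w = 1 \<Longrightarrow> unitary_mat (diag2 v w)"
  by (simp add: unitary_mat_def diag2_eq_mat2 mat_1_eq_mat2 cnj_mult_self_unit)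

lemma J_unitary_diag2: "cmod v = 1 \<Longrightarrow> cmod w = 1 \<Longrightarrow> J_unitary (diag2 j1 j2) (diag2 v w)"
  by (simp add: J_unitary_def diag2_eq_mat2 mult.left_commute[of "cnj _"] cnj_mult_self_unit)

definition swap2 :: "complex^2^2" where
  "swap2 = mat2 0 1 1 0"

lemma conj_transpose_swap2: "conj_transpose swap2 = swap2"
  by (simp add: swap2_def)

lemma unitary_mat_swap2: "unitary_mat swap2"
  by (simp add: unitary_mat_def swap2_def mat_1_eq_mat2)

lemma J_unitary_swap2: "J_unitary (diag2 j j) swap2"
  by (simp add: J_unitary_def swap2_def diag2_eq_mat2)

lemma col_norm_mult_swap2:
  fixes G :: "complex^2^2"
  shows "col_norm (G ** swap2) 1 = col_norm G 2" "col_norm (G ** swap2) 2 = col_norm G 1"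
  by (subst (1 2) mat2_eta[of G], simp add: swap2_def col_norm_2)+

lemma swap2_diag2_swap2: "swap2 ** diag2 v w ** swap2 = diag2 w v"
  by (simp add: swap2_def diag2_eq_mat2)

definition real_nonneg_mat :: "complex^2^2 \<Rightarrow> bool" where
  "real_nonneg_mat T \<longleftrightarrow> (\<forall>i k. T $ i $ k \<in> \<real> \<and> Re (T $ i $ k) \<ge> 0)"

definition upper_dominant :: "complex^2^2 \<Rightarrow> bool" where
  "upper_dominant T \<longleftrightarrow> real_nonneg_mat T \<and> T $ 2 $ 1 = 0 \<and>
     (Re (T $ 1 $ 2))\<^sup>2 + (Re (T $ 2 $ 2))\<^sup>2 \<le> (Re (T $ 1 $ 1))\<^sup>2"

definition lower_dominant :: "complex^2^2 \<Rightarrow> bool" where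
  "lower_dominant T \<longleftrightarrow> real_nonneg_mat T \<and> T $ 1 $ 2 = 0 \<and>
     (Re (T $ 2 $ 1))\<^sup>2 + (Re (T $ 1 $ 1))\<^sup>2 \<le> (Re (T $ 2 $ 2))\<^sup>2"

lemma real_nonneg_mat2:
  "real_nonneg_mat (mat2 p q r s) \<longleftrightarrow> (\<forall>z\<in>{p, q, r, s}. z \<in> \<real> \<and> Re z \<ge> 0)"
  by (auto simp: real_nonneg_mat_def forall_2)

lemma lower_dominant_swap2_conj:
  assumes "upper_dominant T"
  shows "lower_dominant (swap2 ** T ** swap2)"
proof -
  obtain p q r s where "T = mat2 p q r s"
    by (metis mat2_eta)
  with assms show ?thesis
    by (auto simp: upper_dominant_def lower_dominant_def real_nonneg_mat2 swap2_def)
qed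

lemma upper_dominant_mat2_of_real:
  assumes "t11 \<ge> 0" "t12 \<ge> 0" "t22 \<ge> 0" "t12\<^sup>2 + t22\<^sup>2 \<le> t11\<^sup>2"
  shows "upper_dominant (mat2 (of_real t11) (of_real t12) 0 (of_real t22))"
  using assms by (simp add: upper_dominant_def real_nonneg_mat2)

definition unit_phase :: "complex \<Rightarrow> complex" where
  "unit_phase z = (if z = 0 then 1 else sgn z)"

lemma norm_unit_phase [simp]: "cmod (unit_phase z) = 1"
  by (simp add: unit_phase_def norm_sgn)

lemma cnj_unit_phase_mult: "cnj (unit_phase z) * z = of_real (cmod z)"
proof (cases "z = 0")
  case False
  then have "unit_phase z = z / of_real (cmod z)"
    by (simp add: unit_phase_def sgn_div_norm scaleR_conv_of_real divide_inverse_commute)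
  then have "cnj (unit_phase z) * z = cnj z * z / of_real (cmod z)"
    by simp
  also have "\<dots> = of_real (cmod z)"
    using False by (simp add: complex_norm_square[symmetric] mult.commute power2_eq_square)
  finally show ?thesis .
qed (simp add: unit_phase_def)

lemma lagrange_identity_complex2:
  "(cmod (cnj a1 * b1 + cnj a2 * b2))\<^sup>2 + (cmod (a1 * b2 - a2 * b1))\<^sup>2
     = ((cmod a1)\<^sup>2 + (cmod a2)\<^sup>2) * ((cmod b1)\<^sup>2 + (cmod b2)\<^sup>2)"
  by (simp only: cmod_power2) (simp add: power2_eq_square algebra_simps)

lemma unitary_mat_first_column:
  assumes "a1 * cnj a1 + a2 * cnj a2 = R * R" and "R \<noteq> 0" and "cnj R = R" and "cmod p = 1"
  shows "unitary_mat (mat2 (a1 / R) (- cnj a2 / R * p) (a2 / R) (cnj a1 / R * p))"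
proof -
  have "p * cnj p = 1"
    using cnj_mult_self_unit[OF assms(4)] by (simp add: mult.commute)
  then have phase_cancel: "x * (p * (y * cnj p)) = x * y" for x y
    by (metis mult.left_commute mult_1_right)
  show ?thesis
    using assms unfolding unitary_mat_def mat_1_eq_mat2
    by (simp add: field_simps) (simp only: phase_cancel assms(1))
qed

lemma unitary_upper_dominant_columns:
  fixes a1 a2 b1 b2 :: complex
  assumes le: "(cmod b1)\<^sup>2 + (cmod b2)\<^sup>2 \<le> (cmod a1)\<^sup>2 + (cmod a2)\<^sup>2"
  shows "\<exists>U w. unitary_mat U \<and> cmod w = 1 \<and>
           upper_dominant (conj_transpose U ** mat2 a1 (w * b1) a2 (w * b2))"
proof (cases "a1 = 0 \<and> a2 = 0")
  case True
  with le have "b1 = 0 \<and> b2 = 0"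
    by (simp add: sum_power2_le_zero_iff)
  with True show ?thesis
    by (intro exI[of _ "mat 1"] exI[of _ 1])
       (simp add: unitary_mat_def mat_1_eq_mat2 upper_dominant_def real_nonneg_mat2)
next
  case False
  define r where "r = sqrt ((cmod a1)\<^sup>2 + (cmod a2)\<^sup>2)"
  have r_pos: "r > 0"
    using False by (simp add: r_def sum_power2_gt_zero_iff)
  have r_sq: "r\<^sup>2 = (cmod a1)\<^sup>2 + (cmod a2)\<^sup>2"
    by (simp add: r_def)
  define R where "R = complex_of_real r"
  have R_sq: "a1 * cnj a1 + a2 * cnj a2 = R * R"
    unfolding R_def by (metis r_sq complex_norm_square of_real_add of_real_mult power2_eq_square)
  have R_nz: "R \<noteq> 0" and R_real: "cnj R = R"
    using r_pos by (simp_all add: R_def)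
  define c where "c = (cnj a1 * b1 + cnj a2 * b2) / R"
  define d where "d = (a1 * b2 - a2 * b1) / R"
  define w where "w = cnj (unit_phase c)"
  define p where "p = unit_phase (w * d)"
  define U where "U = mat2 (a1 / R) (- cnj a2 / R * p) (a2 / R) (cnj a1 / R * p)"
  have "cmod w = 1"
    by (simp add: w_def)
  have "unitary_mat U"
    unfolding U_def p_def using R_sq R_nz R_real by (intro unitary_mat_first_column) simp_all
  have "conj_transpose U ** mat2 a1 (w * b1) a2 (w * b2) = mat2 R (w * c) 0 (cnj p * (w * d))"
    unfolding U_def using R_nz R_sq R_real by (simp add: c_def d_def field_simps)
  also have "\<dots> = mat2 (of_real r) (of_real (cmod c)) 0 (of_real (cmod d))"
    using \<open>cmod w = 1\<close> by (simp add: R_def w_def p_def cnj_unit_phase_mult norm_mult)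
  finally have T: "conj_transpose U ** mat2 a1 (w * b1) a2 (w * b2)
                     = mat2 (of_real r) (of_real (cmod c)) 0 (of_real (cmod d))" .
  have "(cmod c)\<^sup>2 + (cmod d)\<^sup>2
          = ((cmod (cnj a1 * b1 + cnj a2 * b2))\<^sup>2 + (cmod (a1 * b2 - a2 * b1))\<^sup>2) / r\<^sup>2"
    by (simp add: c_def d_def R_def norm_divide power_divide del: add_divide_distrib)
       (simp add: add_divide_distrib)
  also have "\<dots> = (cmod b1)\<^sup>2 + (cmod b2)\<^sup>2"
    unfolding lagrange_identity_complex2 r_sq[symmetric] using r_pos by simp
  finally have "(cmod c)\<^sup>2 + (cmod d)\<^sup>2 \<le> r\<^sup>2"
    using le r_sq by simp
  then show ?thesis
    using \<open>unitary_mat U\<close> \<open>cmod w = 1\<close> r_pos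
    by (intro exI[of _ U] exI[of _ w]) (simp add: T upper_dominant_mat2_of_real)
qed

lemma unitary_upper_dominant:
  fixes G :: "complex^2^2"
  assumes "col_norm G 2 \<le> col_norm G 1"
  shows "\<exists>U w. unitary_mat U \<and> cmod w = 1 \<and> upper_dominant (conj_transpose U ** G ** diag2 1 w)"
proof -
  obtain g11 g12 g21 g22 where G: "G = mat2 g11 g12 g21 g22"
    by (metis mat2_eta)
  have "G ** diag2 1 w = mat2 g11 (w * g12) g21 (w * g22)" for w
    by (simp add: G diag2_eq_mat2 mult.commute)
  moreover have "(cmod g12)\<^sup>2 + (cmod g22)\<^sup>2 \<le> (cmod g11)\<^sup>2 + (cmod g21)\<^sup>2"
    using assms by (simp add: G col_norm_2)
  ultimately show ?thesis
    by (metis unitary_upper_dominant_columns matrix_mul_assoc)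
qed

lemma unitary_lower_dominant:
  fixes G :: "complex^2^2"
  assumes "col_norm G 1 \<le> col_norm G 2"
  shows "\<exists>U w. unitary_mat U \<and> cmod w = 1 \<and> lower_dominant (conj_transpose U ** G ** diag2 w 1)"
proof -
  obtain U w where U: "unitary_mat U" and w: "cmod w = 1"
    and T: "upper_dominant (conj_transpose U ** (G ** swap2) ** diag2 1 w)"
    using unitary_upper_dominant[of "G ** swap2"] assms by (auto simp: col_norm_mult_swap2)
  have "conj_transpose (U ** swap2) ** G ** diag2 w 1
          = swap2 ** conj_transpose U ** G ** (swap2 ** diag2 1 w ** swap2)"
    by (simp add: conj_transpose_mult conj_transpose_swap2 swap2_diag2_swap2)
  also have "\<dots> = swap2 ** (conj_transpose U ** (G ** swap2) ** diag2 1 w) ** swap2"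
    by (simp add: matrix_mul_assoc)
  finally show ?thesis
    using U w T unitary_mat_swap2 lower_dominant_swap2_conj unitary_mat_mult by metis
qed

theorem mainTheorem7:
  fixes G :: "complex^2^2" and j1 j2 :: complex
  assumes "j1 \<in> {1, -1}" and "j2 \<in> {1, -1}"
  shows "\<exists>U V :: complex^2^2.
     unitary_mat U \<and> unitary_mat V \<and> J_unitary (diag2 j1 j2) V \<and>
     (let T = conj_transpose U ** G ** V in
        (\<forall>i k. T $ i $ k \<in> \<real> \<and> Re (T $ i $ k) \<ge> 0) \<and>
        ((j1 = j2 \<or> (j1 \<noteq> j2 \<and> col_norm G 1 \<ge> col_norm G 2)) \<longrightarrow>
           T $ 2 $ 1 = 0 \<and>
           (Re (T $ 1 $ 1))\<^sup>2 \<ge> (Re (T $ 1 $ 2))\<^sup>2 + (Re (T $ 2 $ 2))\<^sup>2) \<and>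
        ((j1 \<noteq> j2 \<and> col_norm G 1 < col_norm G 2) \<longrightarrow>
           T $ 1 $ 2 = 0 \<and>
           (Re (T $ 2 $ 2))\<^sup>2 \<ge> (Re (T $ 2 $ 1))\<^sup>2 + (Re (T $ 1 $ 1))\<^sup>2))"
proof -
  consider (upper) "col_norm G 2 \<le> col_norm G 1"
    | (swapped) "col_norm G 1 < col_norm G 2" "j1 = j2"
    | (lower) "col_norm G 1 < col_norm G 2" "j1 \<noteq> j2"
    by linarith
  then show ?thesis
  proof cases
    case upper
    then obtain U w where "unitary_mat U" "cmod w = 1" "upper_dominant (conj_transpose U ** G ** diag2 1 w)"
      using unitary_upper_dominant by blast
    with upper show ?thesis
      by (intro exI[of _ U] exI[of _ "diag2 1 w"])
         (auto simp: Let_def upper_dominant_def real_nonneg_mat_def unitary_mat_diag2 J_unitary_diag2)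
  next
    case swapped
    then obtain U w where "unitary_mat U" "cmod w = 1"
      "upper_dominant (conj_transpose U ** (G ** swap2) ** diag2 1 w)"
      using unitary_upper_dominant[of "G ** swap2"] by (auto simp: col_norm_mult_swap2)
    with swapped show ?thesis
      by (intro exI[of _ U] exI[of _ "swap2 ** diag2 1 w"])
         (auto simp: Let_def upper_dominant_def real_nonneg_mat_def matrix_mul_assoc
           unitary_mat_mult unitary_mat_swap2 unitary_mat_diag2
           J_unitary_mult J_unitary_swap2 J_unitary_diag2)
  next
    case lower
    then obtain U w where "unitary_mat U" "cmod w = 1" "lower_dominant (conj_transpose U ** G ** diag2 w 1)"
      using unitary_lower_dominant[of G] by fastforce
    with lower show ?thesis
      by (intro exI[of _ U] exI[of _ "diag2 w 1"])
         (auto simp: Let_def lower_dominant_def real_nonneg_mat_def unitary_mat_diag2 J_unitary_diag2)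
  qed
qed

end
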